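(* Let $h_n>0$ and $k_n>0$ be sequences with $h_n\to0$, $k_n\to0$, let $f$ be a real valued function defined on the set $D=\{0,h_1,-k_1,h_2,-k_2,\ldots\}$, and let $L,R$ be real numbers such that \[\frac{f(h_n)}{h_n}\to R\quad\text{and}\quad\frac{f(-k_n)}{-k_n}\to L.\] Then every sequential cord derivative of $f$ at $0$ is a real number between $R$ and $L$ (inclusive).
   Context: $L'\in\overline{\mathbb{R}}=\mathbb{R}\cup\{\pm\infty\}$ is a sequential cord derivative of $f$ at $0$ if there are sequences $h'_n>0$, $k'_n>0$ with $h'_n\to0$, $k'_n\to0$, $h'_n\in D$, $-k'_n\in D$ for all $n$, and $\frac{f(h'_n)-f(-k'_n)}{h'_n+k'_n}\to L'$. *)

theory Defs
  imports "HOL-Analysis.Analysis"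
begin

definition seq_cord_deriv :: "(real \<Rightarrow> real) \<Rightarrow> real set \<Rightarrow> ereal \<Rightarrow> bool" where
  "seq_cord_deriv f D L' \<longleftrightarrow>
     (\<exists>h' k' :: nat \<Rightarrow> real.
        (\<forall>n. h' n > 0 \<and> k' n > 0 \<and> h' n \<in> D \<and> - k' n \<in> D) \<and>
        h' \<longlonglongrightarrow> 0 \<and> k' \<longlonglongrightarrow> 0 \<and>
        (\<lambda>n. ereal ((f (h' n) - f (- k' n)) / (h' n + k' n))) \<longlonglongrightarrow> L')"

end

theory Submission
  imports Defs
begin

text \<open>The cord quotient over [-k', h'] is a weighted mean of the one-sided difference
quotients f(h')/h' and f(-k')/(-k') with weights h' and k'. Since every h' is some h m
and h' tends to 0, only h m with large m occur eventually, so f(h')/h' tends to R;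
likewise f(-k')/(-k') tends to L, and the cord quotients are squeezed between
min R L and max R L.\<close>

lemma tendsto_along_null_sequence_in_range:
  fixes g :: "'a::real_normed_vector \<Rightarrow> 'b::topological_space" and h s :: "nat \<Rightarrow> 'a"
  assumes nonzero: "\<And>n. h n \<noteq> 0" and lim_g: "(\<lambda>n. g (h n)) \<longlonglongrightarrow> R"
    and in_range: "\<And>n. s n \<in> range h" and null: "s \<longlonglongrightarrow> 0"
  shows "(\<lambda>n. g (s n)) \<longlonglongrightarrow> R"
proof (rule topological_tendstoI)
  fix S assume "open S" "R \<in> S"
  then obtain N where N: "\<And>m. m \<ge> N \<Longrightarrow> g (h m) \<in> S"
    using lim_g unfolding tendsto_def eventually_sequentially by blast
  txt \<open>The finitely many h m with m < N stay at distance d from 0, so eventually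
    the values of s can only be terms h m with m \<ge> N.\<close>
  define d where "d = Min (insert 1 (norm ` h ` {..<N}))"
  have "d > 0" unfolding d_def using nonzero by (subst Min_gr_iff) auto
  have d_le: "d \<le> norm (h m)" if "m < N" for m unfolding d_def using that by auto
  from tendsto_norm_zero[OF null] \<open>d > 0\<close>
  have "\<forall>\<^sub>F n in sequentially. norm (s n) < d" by (rule order_tendstoD(2))
  then show "\<forall>\<^sub>F n in sequentially. g (s n) \<in> S"
  proof eventually_elim
    case (elim n)
    obtain m where m: "s n = h m" using in_range by blast
    with elim have "norm (h m) < d" by simp
    with d_le have "m \<ge> N" by (meson leI not_le)
    with m N show ?case by simp
  qed
qed

lemma weighted_mean_between_min_max:
  fixes p q a b :: real
  assumes "p > 0" "q > 0"
  shows "min a b \<le> (p * a + q * b) / (p + q)" and "(p * a + q * b) / (p + q) \<le> max a b"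
proof -
  have "(p + q) * min a b \<le> p * a + q * b"
    using assms by (simp add: distrib_right add_mono mult_left_mono)
  then show "min a b \<le> (p * a + q * b) / (p + q)"
    using assms by (simp add: pos_le_divide_eq mult.commute)
  have "p * a + q * b \<le> (p + q) * max a b"
    using assms by (simp add: distrib_right add_mono mult_left_mono)
  then show "(p * a + q * b) / (p + q) \<le> max a b"
    using assms by (simp add: pos_divide_le_eq mult.commute)
qed

lemma cord_quotient_between_one_sided_quotients:
  fixes f :: "real \<Rightarrow> real" and x y :: real
  assumes "x > 0" "y > 0"
  shows "min (f x / x) (f (- y) / (- y)) \<le> (f x - f (- y)) / (x + y)"
    and "(f x - f (- y)) / (x + y) \<le> max (f x / x) (f (- y) / (- y))"
  using weighted_mean_between_min_max[OF assms, of "f x / x" "f (- y) / (- y)"] assms by simp_all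

lemma positive_points_of_cord_domain:
  fixes h k :: "nat \<Rightarrow> real"
  assumes "\<forall>n. h n > 0" "\<forall>n. k n > 0" "D = {0} \<union> range h \<union> range (\<lambda>n. - k n)"
  shows "x \<in> D \<Longrightarrow> x > 0 \<Longrightarrow> x \<in> range h" and "- x \<in> D \<Longrightarrow> x > 0 \<Longrightarrow> x \<in> range k"
  using assms by (auto, metis less_asym, metis less_asym neg_less_0_iff_less)

lemma ereal_limit_between_min_max:
  fixes a b c :: "nat \<Rightarrow> real"
  assumes "a \<longlonglongrightarrow> R" "b \<longlonglongrightarrow> L" "(\<lambda>n. ereal (c n)) \<longlonglongrightarrow> L'"
    and "\<And>n. min (a n) (b n) \<le> c n" "\<And>n. c n \<le> max (a n) (b n)"
  shows "\<exists>r. L' = ereal r \<and> min R L \<le> r \<and> r \<le> max R L"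
proof -
  have "(\<lambda>n. ereal (min (a n) (b n))) \<longlonglongrightarrow> ereal (min R L)"
    using assms(1,2) by (intro tendsto_ereal tendsto_min)
  from this assms(3) have lower: "ereal (min R L) \<le> L'"
    by (rule LIMSEQ_le) (use assms(4) in \<open>auto simp: min_def\<close>)
  have "(\<lambda>n. ereal (max (a n) (b n))) \<longlonglongrightarrow> ereal (max R L)"
    using assms(1,2) by (intro tendsto_ereal tendsto_max)
  with assms(3) have upper: "L' \<le> ereal (max R L)"
    by (rule LIMSEQ_le) (use assms(5) in \<open>auto simp: max_def\<close>)
  from lower upper show ?thesis by (cases L') (auto simp: min_def max_def split: if_splits)
qed

theorem proposition4p4:
  fixes h k :: "nat \<Rightarrow> real" and f :: "real \<Rightarrow> real" and L R :: real
    and D :: "real set" and L' :: ereal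
  assumes "\<forall>n. h n > 0" and "\<forall>n. k n > 0"
    and "h \<longlonglongrightarrow> 0" and "k \<longlonglongrightarrow> 0"
    and "D = {0} \<union> range h \<union> range (\<lambda>n. - k n)"
    and "(\<lambda>n. f (h n) / h n) \<longlonglongrightarrow> R"
    and "(\<lambda>n. f (- k n) / (- k n)) \<longlonglongrightarrow> L"
    and "seq_cord_deriv f D L'"
  shows "\<exists>r::real. L' = ereal r \<and> min R L \<le> r \<and> r \<le> max R L"
proof -
  obtain h' k' :: "nat \<Rightarrow> real" where
    pos_in_D: "\<And>n. h' n > 0 \<and> k' n > 0 \<and> h' n \<in> D \<and> - k' n \<in> D"
    and "h' \<longlonglongrightarrow> 0" "k' \<longlonglongrightarrow> 0"
    and cord: "(\<lambda>n. ereal ((f (h' n) - f (- k' n)) / (h' n + k' n))) \<longlonglongrightarrow> L'"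
    using assms(8) unfolding seq_cord_deriv_def by blast
  have "h' n \<in> range h" "k' n \<in> range k" for n
    using pos_in_D positive_points_of_cord_domain[OF assms(1,2,5)] by auto
  then have right: "(\<lambda>n. f (h' n) / h' n) \<longlonglongrightarrow> R"
    and left: "(\<lambda>n. f (- k' n) / (- k' n)) \<longlonglongrightarrow> L"
    using tendsto_along_null_sequence_in_range[of h "\<lambda>x. f x / x" R h']
      tendsto_along_null_sequence_in_range[of k "\<lambda>x. f (- x) / (- x)" L k']
      assms(1,2,6,7) \<open>h' \<longlonglongrightarrow> 0\<close> \<open>k' \<longlonglongrightarrow> 0\<close>
    by (simp_all add: less_imp_neq[symmetric])
  show ?thesis
    using ereal_limit_between_min_max[OF right left cord]
      cord_quotient_between_one_sided_quotients pos_in_D by blast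
qed

end
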